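(* Let $\varphi$ be an Orlicz $N$-function with Young–Fenchel transform $\psi$ and let $q_\varphi$ be the generalized inverse of the density of $\varphi$. Let $\{X_{k,n},k,n\ge1\}$ be a double array of independent $\varphi$-subgaussian random variables, and let $g$ be a positive non-decreasing function with $\tau_\varphi(X_{k,n})\le g(\ln(kn))$ for all $k,n\ge1$. Set $a_{m,j}=g(\ln(mj))\psi^{-1}(\ln(mj))$, $Y_{m,j}=\max_{1\le k\le m,1\le n\le j}X_{k,n}-a_{m,j}$ and $Y^-_{m,j}=\max(-Y_{m,j},0)$. Let $\kappa$ be a positive increasing differentiable function whose derivative $r=\kappa'$ is non-decreasing on $(0,\infty)$. Assume there is $C>0$ such that for all $k,n\ge1$ and all $x>0$ $$P\left(\frac{X_{k,n}}{g(\ln(kn))}<x\right)\le\exp\left(-Ce^{-\kappa(x)}\right),$$ and that $$\psi(x)-\kappa\left(\frac{x\,g(x)}{g(0)}\right)\ge C_0(x)$$ for some function $C_0$. Suppose there exist $A,\varepsilon_0>0$ such that for every $\varepsilon\in(0,\varepsilon_0]$ $$\int_A^{+\infty}\exp\left(-\frac{Cy}{2}\exp\left(-\kappa\left(\frac{g(\ln y)}{g(0)}\psi^{-1}(\ln y)-\frac{\varepsilon}{g(\ln y)}\right)\right)\right)dy<+\infty$$ and $$\int_A^{+\infty}\psi(y)q_\varphi(y)\exp\left(\psi(y)-\frac C2\exp\left(C_0(y)+\frac{\varepsilon\, r\left(\frac{y\,g(\psi(y))}{g(0)}-\frac{\varepsilon}{g(\psi(y))}\right)}{g(\psi(y))}\right)\right)dy<+\infty.$$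 Then $\lim_{m\vee j\to\infty}Y^-_{m,j}=0$ almost surely.
   Context: An Orlicz $N$-function is a continuous even convex function $\varphi:\mathbb R\to\mathbb R$ with $\varphi(0)=0$, increasing on $(0,\infty)$, with $\varphi(x)/x\to0$ as $x\to0$ and $\varphi(x)/x\to+\infty$ as $x\to+\infty$. It can be written $\varphi(x)=\int_0^{|x|}p_\varphi(t)\,dt$ with non-decreasing density $p_\varphi$; its generalized inverse is $q_\varphi(t)=\sup\{u\ge0:p_\varphi(u)\le t\}$. The Young–Fenchel transform is $\psi(x)=\sup_{y\in\mathbb R}(xy-\varphi(y))$, with $\psi(x)=\int_0^{|x|}q_\varphi(t)dt$; $\psi^{-1}$ is the inverse of $\psi$ on $[0,\infty)$. A random variable $X$ is $\varphi$-subgaussian if $EX=0$ and there is a finite $a>0$ with $E\exp(tX)\le\exp(\varphi(at))$ for all $t$; $\tau_\varphi(X)=\inf\{a>0:E\exp(tX)\le\exp(\varphi(at))\ \forall t\}$. $\lim_{m\vee j\to\infty}b_{m,j}=b$ means: for every $\varepsilon>0$ there is $N$ with $|b_{m,j}-b|<\varepsilon$ whenever $\max(m,j)\ge N$. *)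

theory Defs
  imports "HOL-Probability.Probability"
begin

definition orlicz_N :: "(real \<Rightarrow> real) \<Rightarrow> bool" where
  "orlicz_N \<phi> \<longleftrightarrow> continuous_on UNIV \<phi> \<and> (\<forall>x. \<phi> (-x) = \<phi> x) \<and> convex_on UNIV \<phi>
     \<and> \<phi> 0 = 0 \<and> strict_mono_on {0<..} \<phi>
     \<and> ((\<lambda>x. \<phi> x / x) \<longlongrightarrow> 0) (at_right 0)
     \<and> filterlim (\<lambda>x. \<phi> x / x) at_top at_top"

definition orlicz_density :: "(real \<Rightarrow> real) \<Rightarrow> (real \<Rightarrow> real) \<Rightarrow> bool" where
  "orlicz_density \<phi> p \<longleftrightarrow> mono_on {0..} p \<and> (\<forall>x. \<phi> x = integral {0..\<bar>x\<bar>} p)"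

definition gen_inv :: "(real \<Rightarrow> real) \<Rightarrow> real \<Rightarrow> real" where
  "gen_inv p t = Sup {u. u \<ge> 0 \<and> p u \<le> t}"

definition young_fenchel :: "(real \<Rightarrow> real) \<Rightarrow> real \<Rightarrow> real" where
  "young_fenchel \<phi> x = (SUP y. x * y - \<phi> y)"

definition inv_nonneg :: "(real \<Rightarrow> real) \<Rightarrow> real \<Rightarrow> real" where
  "inv_nonneg \<psi> s = (THE x. x \<ge> 0 \<and> \<psi> x = s)"

definition mgf_bound :: "'a measure \<Rightarrow> (real \<Rightarrow> real) \<Rightarrow> ('a \<Rightarrow> real) \<Rightarrow> real \<Rightarrow> bool" where
  "mgf_bound M \<phi> X a \<longleftrightarrow>
     (\<forall>t. (\<integral>\<^sup>+ \<omega>. ennreal (exp (t * X \<omega>)) \<partial>M) \<le> ennreal (exp (\<phi> (a * t))))"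

definition phi_subgaussian :: "'a measure \<Rightarrow> (real \<Rightarrow> real) \<Rightarrow> ('a \<Rightarrow> real) \<Rightarrow> bool" where
  "phi_subgaussian M \<phi> X \<longleftrightarrow> X \<in> borel_measurable M \<and> integrable M X \<and> integral\<^sup>L M X = 0
     \<and> (\<exists>a>0. mgf_bound M \<phi> X a)"

definition tau_phi :: "'a measure \<Rightarrow> (real \<Rightarrow> real) \<Rightarrow> ('a \<Rightarrow> real) \<Rightarrow> real" where
  "tau_phi M \<phi> X = Inf {a. a > 0 \<and> mgf_bound M \<phi> X a}"

definition double_lim :: "(nat \<Rightarrow> nat \<Rightarrow> real) \<Rightarrow> real \<Rightarrow> bool" where
  "double_lim b l \<longleftrightarrow> (\<forall>e>0. \<exists>N. \<forall>m j. m \<ge> 1 \<longrightarrow> j \<ge> 1 \<longrightarrow> max m j \<ge> N \<longrightarrow> \<bar>b m j - l\<bar> < e)"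

end

theory Submission
  imports Defs "HOL-Library.Nat_Bijection"
begin

text \<open>Fix \<open>\<epsilon> > 0\<close>. By independence, the tail bound and the monotonicity of \<open>g\<close>, the
  probability that every \<open>X k n\<close> with \<open>k \<le> m\<close>, \<open>n \<le> j\<close> stays below \<open>a m j - \<epsilon>\<close> is at
  most \<open>exp (-C y exp (-\<kappa> (h y)))\<close> with \<open>y = m j\<close>, where \<open>h\<close> is the argument of \<open>\<kappa>\<close> in the first
  integral. That integrand is monotone for large \<open>y\<close>, so its integral over \<open>[y, 3y/2]\<close> bounds
  the probability by \<open>O(y powr (-4/3))\<close>, which is summable over all pairs \<open>(m, j)\<close>.
  Borel--Cantelli along the pairs, and then along a sequence \<open>\<epsilon> \<rightarrow> 0\<close>, gives the claim.\<close>

lemma orlicz_N_nonneg: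
  assumes "orlicz_N \<phi>" shows "\<phi> x \<ge> 0"
proof -
  have "\<phi> 0 \<le> (1/2) * \<phi> x + (1/2) * \<phi> (-x)"
    using assms convex_onD[of UNIV \<phi> "1/2" x "-x"] unfolding orlicz_N_def by auto
  then show ?thesis using assms unfolding orlicz_N_def by auto
qed

lemma young_fenchel_bounded:
  assumes "orlicz_N \<phi>" shows "\<exists>B. \<forall>y. x * y - \<phi> y \<le> B"
proof -
  have "\<forall>\<^sub>F y in at_top. \<bar>x\<bar> \<le> \<phi> y / y"
    using assms unfolding orlicz_N_def by (auto simp: filterlim_at_top)
  then obtain R where R: "\<And>y. R \<le> y \<Longrightarrow> \<bar>x\<bar> \<le> \<phi> y / y"
    unfolding eventually_at_top_linorder by blast
  have "x * y - \<phi> y \<le> \<bar>x\<bar> * \<bar>R\<bar>" for y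
  proof -
    have even: "\<phi> y = \<phi> \<bar>y\<bar>" using assms unfolding orlicz_N_def by (cases "y \<ge> 0") auto
    have xy: "x * y \<le> \<bar>x\<bar> * \<bar>y\<bar>" by (metis abs_ge_self abs_mult)
    show ?thesis
    proof (cases "\<bar>y\<bar> \<le> \<bar>R\<bar>")
      case True
      then show ?thesis
        using xy orlicz_N_nonneg[OF assms, of y] mult_left_mono[OF True, of "\<bar>x\<bar>"] by linarith
    next
      case False
      then have "\<bar>x\<bar> * \<bar>y\<bar> \<le> \<phi> \<bar>y\<bar>" using R[of "\<bar>y\<bar>"] by (simp add: le_divide_eq)
      moreover have "0 \<le> \<bar>x\<bar> * \<bar>R\<bar>" by simp
      ultimately show ?thesis using xy even by linarith
    qed
  qed
  then show ?thesis by blast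
qed

lemma young_fenchel_ge: "orlicz_N \<phi> \<Longrightarrow> x * y - \<phi> y \<le> young_fenchel \<phi> x"
  unfolding young_fenchel_def
  by (rule cSUP_upper) (use young_fenchel_bounded[of \<phi> x] in \<open>auto simp: bdd_above_def\<close>)

lemma young_fenchel_least: "(\<And>y. x * y - \<phi> y \<le> B) \<Longrightarrow> young_fenchel \<phi> x \<le> B"
  unfolding young_fenchel_def by (rule cSUP_least) auto

lemma young_fenchel_0: "orlicz_N \<phi> \<Longrightarrow> young_fenchel \<phi> 0 = 0"
  using young_fenchel_ge[of \<phi> 0 0] young_fenchel_least[of 0 \<phi> 0] orlicz_N_nonneg[of \<phi>]
  by (force simp: orlicz_N_def)

lemma young_fenchel_pos:
  assumes "orlicz_N \<phi>" "x > 0" shows "young_fenchel \<phi> x > 0"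
proof -
  have "\<forall>\<^sub>F y in at_right 0. \<phi> y / y < x"
    using assms unfolding orlicz_N_def by (auto intro: order_tendstoD)
  then obtain b where b: "b > 0" "\<And>y. 0 < y \<Longrightarrow> y < b \<Longrightarrow> \<phi> y / y < x"
    unfolding eventually_at_right_field by auto
  then have "0 < x * (b/2) - \<phi> (b/2)" using b(2)[of "b/2"] by (simp add: field_simps)
  then show ?thesis using young_fenchel_ge[OF assms(1), of x "b/2"] by linarith
qed

lemma convex_on_young_fenchel:
  assumes "orlicz_N \<phi>" shows "convex_on UNIV (young_fenchel \<phi>)"
proof (rule convex_onI)
  fix t u v :: real assume t: "0 < t" "t < 1"
  show "young_fenchel \<phi> ((1 - t) *\<^sub>R u + t *\<^sub>R v) \<le> (1 - t) * young_fenchel \<phi> u + t * young_fenchel \<phi> v"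
  proof (rule young_fenchel_least)
    fix y
    have "((1 - t) *\<^sub>R u + t *\<^sub>R v) * y - \<phi> y = (1 - t) * (u * y - \<phi> y) + t * (v * y - \<phi> y)"
      by (simp add: algebra_simps)
    also have "\<dots> \<le> (1 - t) * young_fenchel \<phi> u + t * young_fenchel \<phi> v"
      using t young_fenchel_ge[OF assms, of u y] young_fenchel_ge[OF assms, of v y]
      by (intro add_mono mult_left_mono) auto
    finally show "((1 - t) *\<^sub>R u + t *\<^sub>R v) * y - \<phi> y \<le> \<dots>" .
  qed
qed auto

lemma strict_mono_on_young_fenchel:
  assumes "orlicz_N \<phi>" shows "strict_mono_on {0..} (young_fenchel \<phi>)"
proof (rule strict_mono_onI)
  fix x1 x2 :: real assume x: "x1 \<in> {0..}" "x2 \<in> {0..}" "x1 < x2"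
  let ?f = "young_fenchel \<phi>"
  define t where "t = x1 / x2"
  have t: "0 \<le> t" "t < 1" using x unfolding t_def by auto
  have "?f x1 = ?f ((1 - t) *\<^sub>R 0 + t *\<^sub>R x2)" using x unfolding t_def by simp
  also have "\<dots> \<le> (1 - t) * ?f 0 + t * ?f x2"
    using t by (intro convex_onD[OF convex_on_young_fenchel[OF assms]]) auto
  also have "\<dots> < ?f x2"
    using t young_fenchel_0[OF assms] young_fenchel_pos[OF assms, of x2] x by auto
  finally show "?f x1 < ?f x2" .
qed

lemma continuous_on_young_fenchel: "orlicz_N \<phi> \<Longrightarrow> continuous_on UNIV (young_fenchel \<phi>)"
  by (rule convex_on_continuous[OF _ convex_on_young_fenchel]) auto

lemma inv_nonneg_eqI:
  assumes "strict_mono_on {0..} f" "0 \<le> x" "f x = s"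
  shows "inv_nonneg f s = x"
  unfolding inv_nonneg_def
  using assms strict_mono_on_eqD[OF assms(1)] by (intro the_equality) auto

lemma inv_nonneg_young_fenchel:
  assumes "orlicz_N \<phi>" "0 \<le> s"
  shows "0 \<le> inv_nonneg (young_fenchel \<phi>) s" "young_fenchel \<phi> (inv_nonneg (young_fenchel \<phi>) s) = s"
proof -
  let ?\<psi> = "young_fenchel \<phi>"
  have "?\<psi> 0 \<le> s" "s \<le> ?\<psi> (s + \<phi> 1)" "0 \<le> s + \<phi> 1"
    using assms young_fenchel_0 young_fenchel_ge[OF assms(1), of "s + \<phi> 1" 1] orlicz_N_nonneg
    by auto
  then obtain x where "0 \<le> x" "?\<psi> x = s"
    using IVT'[of ?\<psi> 0 s "s + \<phi> 1"] continuous_on_subset[OF continuous_on_young_fenchel[OF assms(1)]]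
    by blast
  then show "0 \<le> inv_nonneg ?\<psi> s" "?\<psi> (inv_nonneg ?\<psi> s) = s"
    using inv_nonneg_eqI[OF strict_mono_on_young_fenchel[OF assms(1)]] by auto
qed

lemma le_inv_nonneg_young_fenchel_iff:
  assumes "orlicz_N \<phi>" "0 \<le> x" "0 \<le> s"
  shows "x \<le> inv_nonneg (young_fenchel \<phi>) s \<longleftrightarrow> young_fenchel \<phi> x \<le> s"
  using strict_mono_on_less_eq[OF strict_mono_on_young_fenchel[OF assms(1)], of x "inv_nonneg (young_fenchel \<phi>) s"]
    inv_nonneg_young_fenchel[OF assms(1,3)] assms(2) by simp

lemma mono_on_inv_nonneg_young_fenchel:
  assumes "orlicz_N \<phi>" shows "mono_on {0..} (inv_nonneg (young_fenchel \<phi>))"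
proof (rule mono_onI)
  fix r s :: real assume "r \<in> {0..}" "s \<in> {0..}" "r \<le> s"
  then show "inv_nonneg (young_fenchel \<phi>) r \<le> inv_nonneg (young_fenchel \<phi>) s"
    using le_inv_nonneg_young_fenchel_iff[OF assms] inv_nonneg_young_fenchel[OF assms] by simp
qed

lemma filterlim_inv_nonneg_young_fenchel:
  assumes "orlicz_N \<phi>" shows "filterlim (inv_nonneg (young_fenchel \<phi>)) at_top at_top"
  unfolding filterlim_at_top
proof
  fix z :: real
  have "\<forall>\<^sub>F s in at_top. max z 0 \<le> inv_nonneg (young_fenchel \<phi>) s"
    using eventually_ge_at_top[of "young_fenchel \<phi> (max z 0)"] eventually_ge_at_top[of 0]
    by eventually_elim (use le_inv_nonneg_young_fenchel_iff[OF assms, of "max z 0"] in simp)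
  then show "\<forall>\<^sub>F s in at_top. z \<le> inv_nonneg (young_fenchel \<phi>) s"
    by eventually_elim simp
qed

lemma set_integral_ge_interval:
  fixes f :: "real \<Rightarrow> real"
  assumes f: "set_integrable lborel {A..} f" and nonneg: "\<And>y. A \<le> y \<Longrightarrow> 0 \<le> f y"
    and "A \<le> u" "u \<le> v" and ge: "\<And>y. u \<le> y \<Longrightarrow> y \<le> v \<Longrightarrow> c \<le> f y"
  shows "(v - u) * c \<le> (LINT y:{A..}|lborel. f y)"
proof -
  have "(v - u) * c = (\<integral>y. indicator {u..v} y * c \<partial>lborel)"
    using \<open>u \<le> v\<close> by simp
  also have "\<dots> \<le> (\<integral>y. indicator {A..} y *\<^sub>R f y \<partial>lborel)"
  proof (rule integral_mono)
    show "integrable lborel (\<lambda>y. indicator {u..v} y * c)"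
      by (intro integrable_mult_left integrable_real_indicator) (auto simp: emeasure_lborel_Icc_eq)
    show "integrable lborel (\<lambda>y. indicator {A..} y *\<^sub>R f y)"
      using f unfolding set_integrable_def .
    show "indicator {u..v} y * c \<le> indicator {A..} y *\<^sub>R f y" for y
      using ge[of y] nonneg[of y] \<open>A \<le> u\<close> by (auto simp: indicator_def)
  qed
  finally show ?thesis unfolding set_lebesgue_integral_def .
qed

text \<open>The exponent \<open>4/3 = 2 / (3/2)\<close> comes from comparing with the integral over
  \<open>[y, 3y/2]\<close>; all that matters later is that it exceeds 1.\<close>
lemma exp_neg_le_integral_powr:
  fixes w :: "real \<Rightarrow> real" and A C N y :: real
  defines "I \<equiv> LINT t:{A..}|lborel. exp (- (C * t / 2) * w t)"
  assumes int: "set_integrable lborel {A..} (\<lambda>t. exp (- (C * t / 2) * w t))"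
    and w_nonneg: "\<And>t. N \<le> t \<Longrightarrow> 0 \<le> w t"
    and w_antimono: "\<And>s t. N \<le> s \<Longrightarrow> s \<le> t \<Longrightarrow> w t \<le> w s"
    and "0 \<le> C" "A \<le> N" "N \<le> y" "0 < y"
  shows "exp (- C * y * w y) \<le> (2 * I) powr (4/3) * y powr (-4/3)"
proof -
  define v where "v = C * y / 2 * w y"
  have "(3 * y / 2 - y) * exp (- (3/2) * v) \<le> I"
    unfolding I_def
  proof (rule set_integral_ge_interval[OF int])
    fix t assume t: "y \<le> t" "t \<le> 3 * y / 2"
    have "C * t / 2 * w t \<le> C * (3 * y / 2) / 2 * w y"
      using t assms w_nonneg[of t] w_antimono[of y t]
      by (intro mult_mono divide_right_mono mult_left_mono) auto
    then show "exp (- (3/2) * v) \<le> exp (- (C * t / 2) * w t)"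
      unfolding v_def by simp
  qed (use assms in auto)
  then have "exp (- (3/2) * v) \<le> 2 * I / y"
    using \<open>0 < y\<close> by (simp add: field_simps)
  then have "exp (- (3/2) * v) powr (4/3) \<le> (2 * I / y) powr (4/3)"
    by (intro powr_mono2) auto
  moreover have "exp (- C * y * w y) = exp (- (3/2) * v) powr (4/3)"
    unfolding v_def powr_def by simp
  moreover have "(2 * I / y) powr (4/3) = (2 * I) powr (4/3) * y powr (-4/3)"
    using \<open>0 < y\<close> \<open>exp (- (3/2) * v) \<le> 2 * I / y\<close>
    by (simp add: powr_divide powr_minus_divide less_le_trans[OF exp_gt_zero])
  ultimately show ?thesis by simp
qed

lemma summable_prod_decode:
  fixes h :: "nat \<Rightarrow> nat \<Rightarrow> real" and u v :: "nat \<Rightarrow> real"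
  assumes h: "\<And>m j. 0 \<le> h m j" "\<And>m j. h m j \<le> u m * v j"
    and u: "\<And>m. 0 \<le> u m" "summable u" and v: "\<And>j. 0 \<le> v j" "summable v"
  shows "summable (\<lambda>i. case_prod h (prod_decode i))"
proof (rule bounded_imp_summable)
  show "0 \<le> case_prod h (prod_decode i)" for i
    using h by (simp add: case_prod_beta)
  fix n
  have "prod_decode i \<in> {..n} \<times> {..n}" if "i \<le> n" for i
    using that le_prod_encode_1[of "fst (prod_decode i)" "snd (prod_decode i)"]
      le_prod_encode_2[of "snd (prod_decode i)" "fst (prod_decode i)"]
    by (simp add: mem_Times_iff)
  then have decode: "prod_decode ` {..n} \<subseteq> {..n} \<times> {..n}" by blast
  have "(\<Sum>i\<le>n. case_prod h (prod_decode i)) = (\<Sum>p\<in>prod_decode ` {..n}. case_prod h p)"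
    by (subst sum.reindex) (auto intro: inj_prod_decode)
  also have "\<dots> \<le> (\<Sum>(m, j)\<in>{..n} \<times> {..n}. h m j)"
    using decode h by (intro sum_mono2) auto
  also have "\<dots> \<le> (\<Sum>(m, j)\<in>{..n} \<times> {..n}. u m * v j)"
    using h by (intro sum_mono) auto
  also have "\<dots> = (\<Sum>m\<le>n. u m) * (\<Sum>j\<le>n. v j)"
    by (simp add: sum_product sum.cartesian_product)
  also have "\<dots> \<le> suminf u * suminf v"
    using u v by (intro mult_mono sum_le_suminf suminf_nonneg) (auto intro: sum_nonneg)
  finally show "(\<Sum>i\<le>n. case_prod h (prod_decode i)) \<le> suminf u * suminf v" .
qed

lemma eventually_prod_decode_imp_max:
  assumes "eventually (\<lambda>i. case_prod P (prod_decode i)) sequentially"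
  obtains N where "\<And>m j. N \<le> max m j \<Longrightarrow> P m j"
proof -
  obtain N where N: "\<And>i. N \<le> i \<Longrightarrow> case_prod P (prod_decode i)"
    using assms unfolding eventually_sequentially by blast
  have "P m j" if "N \<le> max m j" for m j
    using N[of "prod_encode (m, j)"] that le_prod_encode_1[of m j] le_prod_encode_2[of j m] by simp
  then show thesis by (rule that)
qed

lemma (in prob_space) AE_eventually_notin_powr:
  assumes E: "\<And>m j. E m j \<in> events"
    and prob_le: "\<And>m j. 1 \<le> m \<Longrightarrow> 1 \<le> j \<Longrightarrow> prob (E m j) \<le> K * real (m * j) powr (- p)"
    and "1 < p"
  shows "AE \<omega> in M. \<exists>N. \<forall>m j. 1 \<le> m \<longrightarrow> 1 \<le> j \<longrightarrow> N \<le> max m j \<longrightarrow> \<omega> \<notin> E m j"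
proof -
  define F where "F i = E (Suc (fst (prod_decode i))) (Suc (snd (prod_decode i)))" for i
  have "0 \<le> K" using prob_le[of 1 1] by (simp add: order_trans[OF measure_nonneg])
  have summable_powr: "summable (\<lambda>m. real (Suc m) powr (- p))"
    using \<open>1 < p\<close> summable_Suc_iff[of "\<lambda>m. real m powr (- p)"] by (simp add: summable_real_powr_iff)
  have "summable (\<lambda>i. case_prod (\<lambda>m j. prob (E (Suc m) (Suc j))) (prod_decode i))"
  proof (rule summable_prod_decode)
    show "prob (E (Suc m) (Suc j)) \<le> K * real (Suc m) powr (- p) * real (Suc j) powr (- p)" for m j
      using prob_le[of "Suc m" "Suc j"] unfolding of_nat_mult by (simp add: powr_mult mult.assoc)
  qed (use summable_powr \<open>0 \<le> K\<close> in auto)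
  then have "AE \<omega> in M. eventually (\<lambda>i. \<omega> \<in> space M - F i) sequentially"
    by (intro borel_cantelli_AE1) (auto simp: F_def E case_prod_beta less_top[symmetric])
  then show ?thesis
  proof eventually_elim
    case (elim \<omega>)
    then have "eventually (\<lambda>i. case_prod (\<lambda>m j. \<omega> \<notin> E (Suc m) (Suc j)) (prod_decode i)) sequentially"
      by eventually_elim (simp add: F_def case_prod_beta)
    then obtain N where N: "\<And>m j. N \<le> max m j \<Longrightarrow> \<omega> \<notin> E (Suc m) (Suc j)"
      by (rule eventually_prod_decode_imp_max) blast
    have "\<omega> \<notin> E m j" if "1 \<le> m" "1 \<le> j" "Suc N \<le> max m j" for m j
    proof -
      have "N \<le> max (m - 1) (j - 1)" using that by linarith
      moreover have "Suc (m - 1) = m" "Suc (j - 1) = j" using that by auto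
      ultimately show ?thesis using N by metis
    qed
    then show ?case by blast
  qed
qed

lemma AE_all_pos_mono:
  fixes \<epsilon>0 :: real
  assumes "0 < \<epsilon>0" and AE: "\<And>\<epsilon>. 0 < \<epsilon> \<Longrightarrow> \<epsilon> \<le> \<epsilon>0 \<Longrightarrow> AE x in M. P \<epsilon> x"
    and mono: "\<And>\<epsilon> \<epsilon>' x. \<epsilon> \<le> \<epsilon>' \<Longrightarrow> P \<epsilon> x \<Longrightarrow> P \<epsilon>' x"
  shows "AE x in M. \<forall>\<epsilon>>0. P \<epsilon> x"
proof -
  have "AE x in M. \<forall>i::nat. P (\<epsilon>0 / Suc i) x"
    using assms by (subst AE_all_countable) (auto simp: field_simps)
  then show ?thesis
  proof eventually_elim
    case (elim x)
    show ?case
    proof (intro allI impI)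
      fix \<epsilon> :: real assume "0 < \<epsilon>"
      obtain i where "\<epsilon>0 / \<epsilon> < real (Suc i)"
        using reals_Archimedean2 less_trans of_nat_less_iff lessI by metis
      then have "\<epsilon>0 / Suc i \<le> \<epsilon>" using \<open>0 < \<epsilon>\<close> by (simp add: field_simps)
      then show "P \<epsilon> x" using elim mono by blast
    qed
  qed
qed

lemma double_lim_neg_part_Max:
  fixes x a :: "nat \<Rightarrow> nat \<Rightarrow> real"
  assumes "\<And>e. 0 < e \<Longrightarrow> \<exists>N. \<forall>m j. 1 \<le> m \<longrightarrow> 1 \<le> j \<longrightarrow> N \<le> max m j \<longrightarrow>
      (\<exists>k\<in>{1..m}. \<exists>n\<in>{1..j}. a m j - e \<le> x k n)"
  shows "double_lim (\<lambda>m j. max (- (Max {x k n | k n. 1 \<le> k \<and> k \<le> m \<and> 1 \<le> n \<and> n \<le> j} - a m j)) 0) 0"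
  unfolding double_lim_def
proof (intro allI impI)
  fix e :: real assume "0 < e"
  then obtain N where N: "\<And>m j. 1 \<le> m \<Longrightarrow> 1 \<le> j \<Longrightarrow> N \<le> max m j \<Longrightarrow>
      \<exists>k\<in>{1..m}. \<exists>n\<in>{1..j}. a m j - e / 2 \<le> x k n"
    using assms[of "e / 2"] by (metis half_gt_zero)
  have "\<bar>max (- (Max {x k n | k n. 1 \<le> k \<and> k \<le> m \<and> 1 \<le> n \<and> n \<le> j} - a m j)) 0 - 0\<bar> < e"
    if mj: "1 \<le> m" "1 \<le> j" "N \<le> max m j" for m j
  proof -
    let ?S = "{x k n | k n. 1 \<le> k \<and> k \<le> m \<and> 1 \<le> n \<and> n \<le> j}"
    obtain k n where kn: "k \<in> {1..m}" "n \<in> {1..j}" "a m j - e / 2 \<le> x k n"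
      using N[OF mj] by blast
    have "finite ?S"
      by (rule finite_subset[of _ "(\<lambda>(k, n). x k n) ` ({1..m} \<times> {1..j})"]) auto
    moreover have "x k n \<in> ?S" using kn by auto
    ultimately have "x k n \<le> Max ?S" by (rule Max_ge)
    then show ?thesis using kn \<open>0 < e\<close> by simp
  qed
  then show "\<exists>N. \<forall>m j. 1 \<le> m \<longrightarrow> 1 \<le> j \<longrightarrow> N \<le> max m j \<longrightarrow>
      \<bar>max (- (Max {x k n | k n. 1 \<le> k \<and> k \<le> m \<and> 1 \<le> n \<and> n \<le> j} - a m j)) 0 - 0\<bar> < e"
    by blast
qed

lemma threshold_eventually_pos_mono:
  fixes g \<beta> :: "real \<Rightarrow> real" and \<epsilon> :: real
  defines "h \<equiv> \<lambda>y. g (ln y) / g 0 * \<beta> (ln y) - \<epsilon> / g (ln y)"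
  assumes g_pos: "\<And>x. 0 \<le> x \<Longrightarrow> 0 < g x" and g_mono: "mono_on {0..} g"
    and \<beta>_nonneg: "\<And>x. 0 \<le> x \<Longrightarrow> 0 \<le> \<beta> x" and \<beta>_mono: "mono_on {0..} \<beta>"
    and \<beta>_lim: "filterlim \<beta> at_top at_top" and "0 \<le> \<epsilon>"
  obtains N where "1 \<le> N" "\<And>y. N \<le> y \<Longrightarrow> 0 < h y" "\<And>y y'. N \<le> y \<Longrightarrow> y \<le> y' \<Longrightarrow> h y \<le> h y'"
proof -
  obtain R where R: "\<And>x. R \<le> x \<Longrightarrow> \<epsilon> / g 0 < \<beta> x"
    using \<beta>_lim unfolding filterlim_at_top_dense eventually_at_top_linorder by blast
  define N where "N = max 1 (exp R)"
  have ln: "0 \<le> ln y" "R \<le> ln y" if "N \<le> y" for y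
    using that unfolding N_def by (auto simp: ln_ge_iff)
  have g: "0 < g 0" "g 0 \<le> g (ln y)" if "N \<le> y" for y
    using g_pos g_mono ln[OF that] by (auto intro: mono_onD)
  have pos: "0 < h y" if "N \<le> y" for y
  proof -
    have "\<epsilon> / g (ln y) \<le> \<epsilon> / g 0"
      using g[OF that] \<open>0 \<le> \<epsilon>\<close> by (intro divide_left_mono) auto
    also have "\<dots> < \<beta> (ln y)" using R ln[OF that] by blast
    also have "\<dots> \<le> g (ln y) / g 0 * \<beta> (ln y)"
      using mult_right_mono[of 1 "g (ln y) / g 0" "\<beta> (ln y)"] g[OF that] \<beta>_nonneg[OF ln(1)[OF that]]
      by simp
    finally show ?thesis unfolding h_def by simp
  qed
  have mono: "h y \<le> h y'" if "N \<le> y" "y \<le> y'" for y y'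
  proof -
    have l: "0 \<le> ln y" "ln y \<le> ln y'" using ln[OF that(1)] that N_def by auto
    have "g (ln y) \<le> g (ln y')" "\<beta> (ln y) \<le> \<beta> (ln y')"
      using l g_mono \<beta>_mono by (auto intro: mono_onD)
    then show ?thesis
      unfolding h_def using g[OF that(1)] \<beta>_nonneg[OF l(1)] \<open>0 \<le> \<epsilon>\<close>
      by (intro diff_mono mult_mono divide_right_mono divide_left_mono) auto
  qed
  show thesis by (rule that[of N, OF _ pos mono]) (simp_all add: N_def)
qed

text \<open>\<open>\<beta>\<close> stands for the inverse of the Young--Fenchel transform; the argument only needs it
  nonnegative, monotone and unbounded.\<close>
locale lower_tail_array = prob_space +
  fixes X :: "nat \<Rightarrow> nat \<Rightarrow> 'a \<Rightarrow> real" and g \<kappa> \<beta> :: "real \<Rightarrow> real" and C :: real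
  assumes indep: "indep_vars (\<lambda>_. borel) (\<lambda>(k, n). X k n) ({1..} \<times> {1..})"
    and g_pos: "\<And>x. 0 \<le> x \<Longrightarrow> 0 < g x" and g_mono: "mono_on {0..} g"
    and tail: "\<And>k n x. 1 \<le> k \<Longrightarrow> 1 \<le> n \<Longrightarrow> 0 < x \<Longrightarrow>
        measure M {\<omega> \<in> space M. X k n \<omega> / g (ln (real (k * n))) < x} \<le> exp (- C * exp (- \<kappa> x))"
    and \<kappa>_mono: "mono_on {0<..} \<kappa>"
    and \<beta>_nonneg: "\<And>x. 0 \<le> x \<Longrightarrow> 0 \<le> \<beta> x" and \<beta>_mono: "mono_on {0..} \<beta>"
    and \<beta>_lim: "filterlim \<beta> at_top at_top"
    and C_nonneg: "0 \<le> C"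
begin

lemma measurable_X [measurable]: "1 \<le> k \<Longrightarrow> 1 \<le> n \<Longrightarrow> X k n \<in> borel_measurable M"
  using indep unfolding indep_vars_def by auto

lemma prob_all_less_le_exp:
  fixes m j :: nat and b \<epsilon> :: real
  defines "L \<equiv> g (ln (real (m * j)))"
  defines "h \<equiv> L / g 0 * b - \<epsilon> / L"
  assumes "1 \<le> m" "1 \<le> j" "0 \<le> b" "0 \<le> \<epsilon>" "0 < h"
  shows "prob {\<omega> \<in> space M. \<forall>k\<in>{1..m}. \<forall>n\<in>{1..j}. X k n \<omega> < L * b - \<epsilon>}
    \<le> exp (- C * real (m * j) * exp (- \<kappa> h))"
proof -
  let ?J = "{1..m} \<times> {1..j}" and ?c = "L * b - \<epsilon>"
  have each: "prob {\<omega> \<in> space M. X k n \<omega> < ?c} \<le> exp (- C * exp (- \<kappa> h))"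
    if "k \<in> {1..m}" "n \<in> {1..j}" for k n
  proof -
    define G where "G = g (ln (real (k * n)))"
    have [measurable]: "X k n \<in> borel_measurable M" using that by (simp add: measurable_X)
    have "1 \<le> real (k * n)" "real (k * n) \<le> real (m * j)"
      using that by (auto simp del: of_nat_mult intro: mult_le_mono)
    then have "0 \<le> ln (real (k * n))" "ln (real (k * n)) \<le> ln (real (m * j))"
      by (auto simp del: of_nat_mult intro: ln_mono)
    then have G: "0 < g 0" "g 0 \<le> G" "G \<le> L"
      unfolding G_def L_def using g_pos g_mono by (auto intro: mono_onD)
    have "?c / G = L * b / G - \<epsilon> / G" by (simp add: diff_divide_distrib)
    also have "\<dots> \<le> L * b / g 0 - \<epsilon> / L"
      using G \<open>0 \<le> b\<close> \<open>0 \<le> \<epsilon>\<close> by (intro diff_mono divide_left_mono) auto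
    finally have "{\<omega> \<in> space M. X k n \<omega> < ?c} \<subseteq> {\<omega> \<in> space M. X k n \<omega> / G < h}"
      using G unfolding h_def by (force intro: less_le_trans[OF divide_strict_right_mono])
    then have "prob {\<omega> \<in> space M. X k n \<omega> < ?c} \<le> prob {\<omega> \<in> space M. X k n \<omega> / G < h}"
      by (intro finite_measure_mono) measurable
    also have "\<dots> \<le> exp (- C * exp (- \<kappa> h))"
      using tail that \<open>0 < h\<close> unfolding G_def by auto
    finally show ?thesis .
  qed
  have "{\<omega> \<in> space M. \<forall>k\<in>{1..m}. \<forall>n\<in>{1..j}. X k n \<omega> < ?c}
      = (\<Inter>i\<in>?J. (\<lambda>(k, n). X k n) i -` {..<?c} \<inter> space M)"
    using \<open>1 \<le> m\<close> \<open>1 \<le> j\<close> by auto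
  then have "prob {\<omega> \<in> space M. \<forall>k\<in>{1..m}. \<forall>n\<in>{1..j}. X k n \<omega> < ?c}
      = (\<Prod>(k, n)\<in>?J. prob {\<omega> \<in> space M. X k n \<omega> < ?c})"
    using indep_varsD[OF indep, of ?J "\<lambda>_. {..<?c}"] \<open>1 \<le> m\<close> \<open>1 \<le> j\<close>
    by (simp add: case_prod_beta vimage_def Int_def conj_commute subset_iff)
  also have "\<dots> \<le> (\<Prod>(k, n)\<in>?J. exp (- C * exp (- \<kappa> h)))"
    using each by (intro prod_mono) auto
  also have "\<dots> = exp (- C * real (m * j) * exp (- \<kappa> h))"
    by (simp add: exp_of_nat_mult[symmetric] algebra_simps)
  finally show ?thesis .
qed

lemma prob_all_less_threshold_le_powr:
  fixes A \<epsilon> :: real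
  assumes "0 \<le> \<epsilon>"
    and int: "set_integrable lborel {A..}
        (\<lambda>y. exp (- (C * y / 2) * exp (- \<kappa> (g (ln y) / g 0 * \<beta> (ln y) - \<epsilon> / g (ln y)))))"
  obtains K where "\<And>m j. 1 \<le> m \<Longrightarrow> 1 \<le> j \<Longrightarrow>
    prob {\<omega> \<in> space M. \<forall>k\<in>{1..m}. \<forall>n\<in>{1..j}.
      X k n \<omega> < g (ln (real (m * j))) * \<beta> (ln (real (m * j))) - \<epsilon>} \<le> K * real (m * j) powr (-4/3)"
proof -
  define h where "h y = g (ln y) / g 0 * \<beta> (ln y) - \<epsilon> / g (ln y)" for y
  obtain N0 where "1 \<le> N0" and h_pos: "\<And>y. N0 \<le> y \<Longrightarrow> 0 < h y"
    and h_mono: "\<And>y y'. N0 \<le> y \<Longrightarrow> y \<le> y' \<Longrightarrow> h y \<le> h y'"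
    using threshold_eventually_pos_mono[OF g_pos g_mono \<beta>_nonneg \<beta>_mono \<beta>_lim \<open>0 \<le> \<epsilon>\<close>]
    unfolding h_def by blast
  define N where "N = max A N0"
  define I where "I = (LINT y:{A..}|lborel. exp (- (C * y / 2) * exp (- \<kappa> (h y))))"
  define K where "K = max ((2 * I) powr (4/3)) (N powr (4/3))"
  have "prob {\<omega> \<in> space M. \<forall>k\<in>{1..m}. \<forall>n\<in>{1..j}.
      X k n \<omega> < g (ln (real (m * j))) * \<beta> (ln (real (m * j))) - \<epsilon>} \<le> K * real (m * j) powr (-4/3)"
    (is "prob ?E \<le> _") if mj: "1 \<le> m" "1 \<le> j" for m j
  proof (cases "N \<le> real (m * j)")
    case True
    have "0 \<le> ln (real (m * j))" using mj by (simp del: of_nat_mult)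
    then have "prob ?E \<le> exp (- C * real (m * j) * exp (- \<kappa> (h (real (m * j)))))"
      using prob_all_less_le_exp[OF mj \<beta>_nonneg \<open>0 \<le> \<epsilon>\<close>]
        h_pos[of "real (m * j)"] True unfolding h_def N_def by auto
    also have "\<dots> \<le> (2 * I) powr (4/3) * real (m * j) powr (-4/3)"
      unfolding I_def
    proof (rule exp_neg_le_integral_powr)
      show "set_integrable lborel {A..} (\<lambda>y. exp (- (C * y / 2) * exp (- \<kappa> (h y))))"
        using int unfolding h_def .
      show "exp (- \<kappa> (h t)) \<le> exp (- \<kappa> (h s))" if "N \<le> s" "s \<le> t" for s t
        using that h_pos[of s] h_mono[of s t] unfolding N_def by (auto intro: mono_onD[OF \<kappa>_mono])
    qed (use True mj C_nonneg in \<open>auto simp: N_def\<close>)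
    also have "\<dots> \<le> K * real (m * j) powr (-4/3)"
      unfolding K_def by (intro mult_right_mono) auto
    finally show ?thesis .
  next
    case False
    have "real (m * j) powr (4/3) \<le> N powr (4/3)"
      using False by (intro powr_mono2) auto
    then have "1 \<le> N powr (4/3) * real (m * j) powr (-4/3)"
      using mj by (simp add: powr_minus_divide)
    also have "\<dots> \<le> K * real (m * j) powr (-4/3)"
      unfolding K_def by (intro mult_right_mono) auto
    finally show ?thesis using prob_le_1 order_trans by blast
  qed
  then show thesis by (rule that)
qed

lemma AE_eventually_ex_ge_threshold:
  fixes A \<epsilon> :: real
  assumes "0 \<le> \<epsilon>"
    and int: "set_integrable lborel {A..}
        (\<lambda>y. exp (- (C * y / 2) * exp (- \<kappa> (g (ln y) / g 0 * \<beta> (ln y) - \<epsilon> / g (ln y)))))"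
  shows "AE \<omega> in M. \<exists>N. \<forall>m j. 1 \<le> m \<longrightarrow> 1 \<le> j \<longrightarrow> N \<le> max m j \<longrightarrow>
    (\<exists>k\<in>{1..m}. \<exists>n\<in>{1..j}. g (ln (real (m * j))) * \<beta> (ln (real (m * j))) - \<epsilon> \<le> X k n \<omega>)"
proof -
  define E where "E m j = {\<omega> \<in> space M. \<forall>k\<in>{1..m}. \<forall>n\<in>{1..j}.
    X k n \<omega> < g (ln (real (m * j))) * \<beta> (ln (real (m * j))) - \<epsilon>}" for m j
  obtain K where "\<And>m j. 1 \<le> m \<Longrightarrow> 1 \<le> j \<Longrightarrow> prob (E m j) \<le> K * real (m * j) powr (-4/3)"
    using prob_all_less_threshold_le_powr[OF assms] unfolding E_def by blast
  moreover have "E m j \<in> events" for m j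
    unfolding E_def by measurable
  ultimately have "AE \<omega> in M. \<exists>N. \<forall>m j. 1 \<le> m \<longrightarrow> 1 \<le> j \<longrightarrow> N \<le> max m j \<longrightarrow> \<omega> \<notin> E m j"
    by (intro AE_eventually_notin_powr[where K = K and p = "4/3"]) auto
  then show ?thesis
    using AE_space by eventually_elim (fastforce simp: E_def not_less)
qed

end

theorem theorem2:
  fixes M :: "'a measure" and \<phi> p g \<kappa> r C0 :: "real \<Rightarrow> real"
    and X :: "nat \<Rightarrow> nat \<Rightarrow> 'a \<Rightarrow> real" and C A \<epsilon>0 :: real
  defines "\<psi> \<equiv> young_fenchel \<phi>"
  defines "q \<equiv> gen_inv p"
  defines "a \<equiv> (\<lambda>m j. g (ln (real (m * j))) * inv_nonneg \<psi> (ln (real (m * j))))"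
  defines "Y \<equiv> (\<lambda>m j \<omega>. Max {X k n \<omega> | k n. 1 \<le> k \<and> k \<le> m \<and> 1 \<le> n \<and> n \<le> j} - a m j)"
  defines "Yneg \<equiv> (\<lambda>m j \<omega>. max (- Y m j \<omega>) 0)"
  assumes "prob_space M"
    and "orlicz_N \<phi>" and "orlicz_density \<phi> p"
    and indep: "prob_space.indep_vars M (\<lambda>_. borel) (\<lambda>(k, n). X k n) ({1..} \<times> {1..})"
    and subg: "\<And>k n. k \<ge> 1 \<Longrightarrow> n \<ge> 1 \<Longrightarrow> phi_subgaussian M \<phi> (X k n)"
    and g_pos: "\<And>x. x \<ge> 0 \<Longrightarrow> g x > 0" and g_mono: "mono_on {0..} g"
    and tau_le: "\<And>k n. k \<ge> 1 \<Longrightarrow> n \<ge> 1 \<Longrightarrow> tau_phi M \<phi> (X k n) \<le> g (ln (real (k * n)))"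
    and \<kappa>_pos: "\<And>x. x > 0 \<Longrightarrow> \<kappa> x > 0" and \<kappa>_inc: "strict_mono_on {0<..} \<kappa>"
    and \<kappa>_deriv: "\<And>x. x > 0 \<Longrightarrow> (\<kappa> has_real_derivative r x) (at x)"
    and r_mono: "mono_on {0<..} r"
    and "C > 0"
    and tail: "\<And>k n x. k \<ge> 1 \<Longrightarrow> n \<ge> 1 \<Longrightarrow> x > 0 \<Longrightarrow>
        measure M {\<omega> \<in> space M. X k n \<omega> / g (ln (real (k * n))) < x} \<le> exp (- C * exp (- \<kappa> x))"
    and C0: "\<And>x. x > 0 \<Longrightarrow> \<psi> x - \<kappa> (x * g x / g 0) \<ge> C0 x"
    and "A > 0" and "\<epsilon>0 > 0"
    and int1: "\<And>\<epsilon>. 0 < \<epsilon> \<Longrightarrow> \<epsilon> \<le> \<epsilon>0 \<Longrightarrow> set_integrable lborel {A..}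
        (\<lambda>y. exp (- (C * y / 2) * exp (- \<kappa> (g (ln y) / g 0 * inv_nonneg \<psi> (ln y) - \<epsilon> / g (ln y)))))"
    and int2: "\<And>\<epsilon>. 0 < \<epsilon> \<Longrightarrow> \<epsilon> \<le> \<epsilon>0 \<Longrightarrow> set_integrable lborel {A..}
        (\<lambda>y. \<psi> y * q y * exp (\<psi> y - C / 2 * exp (C0 y
            + \<epsilon> * r (y * g (\<psi> y) / g 0 - \<epsilon> / g (\<psi> y)) / g (\<psi> y))))"
  shows "AE \<omega> in M. double_lim (\<lambda>m j. Yneg m j \<omega>) 0"
proof -
  have \<beta>: "\<And>s. 0 \<le> s \<Longrightarrow> 0 \<le> inv_nonneg \<psi> s" "mono_on {0..} (inv_nonneg \<psi>)"
    "filterlim (inv_nonneg \<psi>) at_top at_top"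
    unfolding \<psi>_def using \<open>orlicz_N \<phi>\<close> inv_nonneg_young_fenchel mono_on_inv_nonneg_young_fenchel
      filterlim_inv_nonneg_young_fenchel by auto
  interpret lower_tail_array M X g \<kappa> "inv_nonneg \<psi>" C
    unfolding lower_tail_array_def lower_tail_array_axioms_def
    using \<open>prob_space M\<close> indep g_pos g_mono tail strict_mono_on_imp_mono_on[OF \<kappa>_inc] \<beta> \<open>0 < C\<close>
    by simp
  have "AE \<omega> in M. \<forall>\<epsilon>>0. \<exists>N. \<forall>m j. 1 \<le> m \<longrightarrow> 1 \<le> j \<longrightarrow> N \<le> max m j \<longrightarrow>
      (\<exists>k\<in>{1..m}. \<exists>n\<in>{1..j}. a m j - \<epsilon> \<le> X k n \<omega>)"
  proof (rule AE_all_pos_mono[OF \<open>0 < \<epsilon>0\<close>])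
    fix \<epsilon> :: real assume \<epsilon>: "0 < \<epsilon>" "\<epsilon> \<le> \<epsilon>0"
    then have "0 \<le> \<epsilon>" by simp
    from AE_eventually_ex_ge_threshold[OF this int1[OF \<epsilon>]]
    show "AE \<omega> in M. \<exists>N. \<forall>m j. 1 \<le> m \<longrightarrow> 1 \<le> j \<longrightarrow> N \<le> max m j \<longrightarrow>
        (\<exists>k\<in>{1..m}. \<exists>n\<in>{1..j}. a m j - \<epsilon> \<le> X k n \<omega>)"
      unfolding a_def .
  qed (meson diff_left_mono order_trans)
  then show ?thesis
    unfolding Yneg_def Y_def by eventually_elim (intro double_lim_neg_part_Max, blast)
qed

end
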